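(* Let $G=K(n_1,\dots,n_s)$ be a complete $s$-partite graph ($s\ge 2$) with parts $V_1,\dots,V_s$, $|V_j|=n_j$. Let $j\in\{1,\dots,s\}$ with $n_j\ge 2$. Then there is an optimal $1$-relaxed coloring $f$ of $G$ (one using $\chi_1(G)$ colors) such that all vertices of $V_j$ receive the same color, i.e. $|f(V_j)|=1$.
   Context: A map $f$ from $V(G)$ to a finite set of colors is a $t$-relaxed coloring if every vertex $u$ has at most $t$ neighbors $v$ with $f(v)=f(u)$; $\chi_t(G)$ is the minimum number of colors in a $t$-relaxed coloring of $G$, and a $t$-relaxed coloring using $\chi_t(G)$ colors is called optimal. $f(S)$ denotes the set of colors used on $S$. *)

theory Defs
  imports Main
begin

text \<open>A graph is given by a vertex set V and a symmetric irreflexive adjacency relation E.\<close>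

definition relaxed_coloring :: "nat \<Rightarrow> 'a set \<Rightarrow> ('a \<Rightarrow> 'a \<Rightarrow> bool) \<Rightarrow> ('a \<Rightarrow> 'c) \<Rightarrow> bool" where
  "relaxed_coloring t V E f \<longleftrightarrow>
     finite (f ` V) \<and> (\<forall>u\<in>V. card {v\<in>V. E u v \<and> f v = f u} \<le> t)"

definition relaxed_chromatic :: "nat \<Rightarrow> 'a set \<Rightarrow> ('a \<Rightarrow> 'a \<Rightarrow> bool) \<Rightarrow> nat" where
  "relaxed_chromatic t V E =
     (LEAST k. \<exists>f :: 'a \<Rightarrow> nat. relaxed_coloring t V E f \<and> card (f ` V) = k)"

text \<open>Complete s-partite graph K(n_1,...,n_s): vertices (i,k) with 1 <= i <= s, k < n i;
  part V_i = {(i,k). k < n i}; two vertices are adjacent iff they lie in different parts.\<close>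

definition mp_vertices :: "nat \<Rightarrow> (nat \<Rightarrow> nat) \<Rightarrow> (nat \<times> nat) set" where
  "mp_vertices s n = {(i, k). 1 \<le> i \<and> i \<le> s \<and> k < n i}"

definition mp_part :: "(nat \<Rightarrow> nat) \<Rightarrow> nat \<Rightarrow> (nat \<times> nat) set" where
  "mp_part n i = {(i, k) | k. k < n i}"

definition mp_adj :: "nat \<times> nat \<Rightarrow> nat \<times> nat \<Rightarrow> bool" where
  "mp_adj u v \<longleftrightarrow> fst u \<noteq> fst v"

end

(* Take an optimal coloring f and two vertices x, y of V_j. Give all of V_j the color f x,
   and give the color f y to the vertices outside V_j that had color f x. No new color appears,
   so the new coloring is still optimal once it is 1-relaxed. It is: a vertex outside V_j sees
   both x and y, so if f x = f y no such vertex had that color; otherwise each of f x, f y occurs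
   at most once outside V_j, so the new color class of f y has at most two vertices, while that
   of f x is exactly the independent set V_j. *)
theory Submission
  imports Defs
begin

lemma relaxed_coloring_1_iff:
  assumes "finite V"
  shows "relaxed_coloring 1 V E f \<longleftrightarrow> finite (f ` V) \<and>
    (\<forall>u\<in>V. \<forall>v\<in>V. \<forall>w\<in>V. E u v \<longrightarrow> E u w \<longrightarrow> f v = f u \<longrightarrow> f w = f u \<longrightarrow> v = w)"
proof -
  have "card {v\<in>V. E u v \<and> f v = f u} \<le> 1 \<longleftrightarrow>
      (\<forall>v\<in>V. \<forall>w\<in>V. E u v \<longrightarrow> E u w \<longrightarrow> f v = f u \<longrightarrow> f w = f u \<longrightarrow> v = w)" for u
  proof -
    have fin: "finite {v\<in>V. E u v \<and> f v = f u}"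
      using assms by simp
    show ?thesis
      unfolding One_nat_def card_le_Suc0_iff_eq[OF fin] by blast
  qed
  then show ?thesis
    unfolding relaxed_coloring_def by blast
qed

lemma relaxed_coloring_inj_on:
  assumes "finite V" "inj_on f V" "\<forall>u\<in>V. \<not> E u u"
  shows "relaxed_coloring t V E f"
  unfolding relaxed_coloring_def
proof (intro conjI ballI)
  show "finite (f ` V)"
    using assms(1) by simp
  fix u
  assume "u \<in> V"
  then have "{v\<in>V. E u v \<and> f v = f u} = {}"
    using assms by (auto dest: inj_onD)
  then show "card {v\<in>V. E u v \<and> f v = f u} \<le> t"
    by (metis card.empty le0)
qed

lemma relaxed_chromatic_le_card:
  assumes "relaxed_coloring t V E (f :: 'a \<Rightarrow> nat)"
  shows "relaxed_chromatic t V E \<le> card (f ` V)"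
  unfolding relaxed_chromatic_def using assms by (blast intro: Least_le)

lemma ex_optimal_relaxed_coloring:
  assumes "finite V" "\<forall>u\<in>V. \<not> E u u"
  obtains f :: "'a \<Rightarrow> nat"
  where "relaxed_coloring t V E f" "card (f ` V) = relaxed_chromatic t V E"
proof -
  obtain f0 :: "'a \<Rightarrow> nat" where "inj_on f0 V"
    using finite_imp_inj_to_nat_seg[OF assms(1)] by blast
  then have "\<exists>k f. relaxed_coloring t V E (f :: 'a \<Rightarrow> nat) \<and> card (f ` V) = k"
    using relaxed_coloring_inj_on assms by blast
  from LeastI_ex[OF this] show ?thesis
    using that unfolding relaxed_chromatic_def by blast
qed

lemma relaxed_coloring_1_unique:
  assumes "finite V" and "relaxed_coloring 1 V E f"
    and "z \<in> V" "a \<in> V" "b \<in> V" "E z a" "E z b" "f a = f z" "f b = f z"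
  shows "a = b"
  using assms(2-) unfolding relaxed_coloring_1_iff[OF assms(1)] by blast

definition merge_part :: "('a \<Rightarrow> 'b) \<Rightarrow> ('a \<Rightarrow> 'c) \<Rightarrow> 'a \<Rightarrow> 'a \<Rightarrow> 'a \<Rightarrow> 'c" where
  "merge_part p f x y v = (if p v = p x then f x else if f v = f x then f y else f v)"

lemma merge_part_image_subset:
  assumes "x \<in> V" "y \<in> V"
  shows "merge_part p f x y ` V \<subseteq> f ` V"
  using assms by (auto simp: merge_part_def)

lemma merge_part_eq_iff:
  assumes "finite V" and f: "relaxed_coloring 1 V (\<lambda>u v. p u \<noteq> p v) f"
    and "x \<in> V" "y \<in> V" "y \<noteq> x" "p y = p x" "a \<in> V"
  shows "merge_part p f x y a = f x \<longleftrightarrow> p a = p x"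
proof
  assume merged: "merge_part p f x y a = f x"
  show "p a = p x"
  proof (rule ccontr)
    assume "p a \<noteq> p x"
    with merged have "f x = f a" "f y = f a"
      by (auto simp: merge_part_def split: if_splits)
    with relaxed_coloring_1_unique[OF \<open>finite V\<close> f, of a x y] \<open>p a \<noteq> p x\<close> assms(3-)
    show False by auto
  qed
qed (simp add: merge_part_def)

lemma relaxed_coloring_1_merge_part:
  assumes "finite V" and f: "relaxed_coloring 1 V (\<lambda>u v. p u \<noteq> p v) f"
    and x: "x \<in> V" and y: "y \<in> V" "y \<noteq> x" "p y = p x"
  shows "relaxed_coloring 1 V (\<lambda>u v. p u \<noteq> p v) (merge_part p f x y)"
  unfolding relaxed_coloring_1_iff[OF \<open>finite V\<close>]
proof (intro conjI ballI impI)
  let ?g = "merge_part p f x y"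
  show "finite (?g ` V)"
    using \<open>finite V\<close> by simp
  note unique = relaxed_coloring_1_unique[OF \<open>finite V\<close> f]
  fix u v w
  assume V: "u \<in> V" "v \<in> V" "w \<in> V" and parts: "p u \<noteq> p v" "p u \<noteq> p w"
    and colors: "?g v = ?g u" "?g w = ?g u"
  have outside: "p u \<noteq> p x" "p v \<noteq> p x" "p w \<noteq> p x"
    using merge_part_eq_iff[OF assms] V parts colors by metis+
  have unique_outside: "a = b"
    if "a \<in> V" "b \<in> V" "p a \<noteq> p x" "p b \<noteq> p x" "f a = f b" "f a \<in> {f x, f y}" for a b
    using that unique[of x a b] unique[of y a b] x y by auto
  show "v = w"
  proof (cases "f v = f u \<and> f w = f u")
    case True
    then show ?thesis
      using unique[of u v w] V parts by auto
  next
    case False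
    then have fu: "f u \<in> {f x, f y}" and fv: "f v \<in> {f x, f y}" and "f w \<in> {f x, f y}"
      using colors outside by (auto simp: merge_part_def split: if_splits)
    then consider "f v = f w" | "f u = f v" | "f u = f w"
      by auto
    then show ?thesis
    proof cases
      case 1
      then show ?thesis
        using unique_outside[of v w] V outside fv by blast
    next
      case 2
      then have "u = v"
        using unique_outside[of u v] V outside fu by blast
      with parts show ?thesis
        by simp
    next
      case 3
      then have "u = w"
        using unique_outside[of u w] V outside fu by blast
      with parts show ?thesis
        by simp
    qed
  qed
qed

lemma mp_adj_eq: "mp_adj = (\<lambda>u v. fst u \<noteq> fst v)"
  by (simp add: mp_adj_def fun_eq_iff)

lemma finite_mp_vertices: "finite (mp_vertices s n)"
proof -
  have "mp_vertices s n = Sigma {1..s} (\<lambda>i. {..<n i})"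
    by (auto simp: mp_vertices_def)
  then show ?thesis
    by simp
qed

theorem lemma4p1:
  fixes s :: nat and n :: "nat \<Rightarrow> nat" and j :: nat
  assumes "s \<ge> 2"
    and "\<forall>i. 1 \<le> i \<and> i \<le> s \<longrightarrow> n i \<ge> 1"
    and "1 \<le> j" and "j \<le> s" and "n j \<ge> 2"
  shows "\<exists>f :: nat \<times> nat \<Rightarrow> nat.
           relaxed_coloring 1 (mp_vertices s n) mp_adj f
         \<and> card (f ` mp_vertices s n) = relaxed_chromatic 1 (mp_vertices s n) mp_adj
         \<and> card (f ` mp_part n j) = 1"
proof -
  let ?V = "mp_vertices s n"
  have x: "(j, 0) \<in> ?V" and y: "(j, 1) \<in> ?V"
    using assms by (auto simp: mp_vertices_def)
  have "\<forall>u\<in>?V. \<not> mp_adj u u"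
    by (simp add: mp_adj_def)
  then obtain f :: "nat \<times> nat \<Rightarrow> nat"
    where f: "relaxed_coloring 1 ?V mp_adj f" and f_opt: "card (f ` ?V) = relaxed_chromatic 1 ?V mp_adj"
    using ex_optimal_relaxed_coloring[OF finite_mp_vertices] by blast
  let ?g = "merge_part fst f (j, 0) (j, 1)"
  have g: "relaxed_coloring 1 ?V mp_adj ?g"
    using relaxed_coloring_1_merge_part[OF finite_mp_vertices, where p = fst and f = f] f x y
    by (simp add: mp_adj_eq)
  have "card (?g ` ?V) = relaxed_chromatic 1 ?V mp_adj"
    using f_opt relaxed_chromatic_le_card[OF g] merge_part_image_subset[OF x y]
      card_mono[OF finite_imageI[OF finite_mp_vertices]]
    by (metis le_antisym)
  moreover have "(j, 0) \<in> mp_part n j"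
    using assms by (simp add: mp_part_def)
  then have "?g ` mp_part n j = {f (j, 0)}"
    by (auto simp: merge_part_def mp_part_def)
  ultimately show ?thesis
    using g by (intro exI[of _ ?g]) simp
qed

end
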